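(* Let $(X,d)$, $\mu$, $Y$ (countable), $f:X\to Y$ be as in the standing setting, fix an integer $K\ge2$, and let $\kappa:\mathbb{Z}^+\to\mathbb{Z}^+$ satisfy $\sum_{n=1}^\infty\rho^{\kappa(n)}=\infty$ for every $0<\rho\le1$. Let $\{z_n\}$ be generated by $\mathcal{S}(\kappa,\Phi)$ where $\Phi(x,S)=|V_S(x)|-\operatorname{modefreq}_f(V_S(x))$ with $V_S(x)$ the $K$-nearest neighbors of $x$ with respect to $S$. If $x\in X$ is contained in an $f$-contiguous component of positive $\mu$-measure, then $\zeta_n(x)\to f(x)$ with probability one.
   Context: Standing setting: $(X,d)$ metric space with probability measure $\mu$; $Y$ countable; $f:X\to Y$; $X_y=f^{-1}(y)$; $B_\epsilon(x)$ open ball; $\operatorname{supp}(\mu)=\{x:\mu(B_\epsilon(x))>0\ \forall\epsilon>0\}$. $b$ is an $f$-boundary point iff $\mu(B_\epsilon(b)\setminus X_{f(b)})>0$ for all $\epsilon>0$. $R\subseteq X$ is $f$-connected iff connected and $R\subseteq X_y$ for some $y$; $f$-contiguous iff $f$-connected, $R\subseteq\operatorname{supp}(\mu)$, and $R$ has no $f$-boundary points; an $f$-contiguous component is a maximal $f$-contiguous set. For finite $A$, $\operatorname{modefreq}_f(A)=\max_y|A\cap X_y|$ ($0$ if $A=\emptyset$). $K$-nearest neighbors: for finite $S\subseteq X$, let $\mathcal{V}_x$ be the family of $K$-element subsets $V\subseteq S$ minimizing distance to $x$ (i.e. no element outside $V$ is strictly closer to $x$ than some element of $V$); set $V_S(x)=\emptyset$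 if $x\in S$, and otherwise $V_S(x)=\arg\min_{V\in\mathcal{V}_x}\operatorname{modefreq}_f(V)$ (a minimizing set). Process $\mathcal{S}(\kappa,\Phi)$: $Z_0=\emptyset$; at step $n$ draw $\kappa(n)$ candidates i.i.d. from $\mu$, independent of the past; $z_n$ is a candidate maximizing $\Phi(\cdot,Z_{n-1})$ (ties uniformly at random); $Z_n=\{z_1,\dots,z_n\}$. Nearest neighbor prediction: $\zeta_n(x)=f(z_\iota)$, $\iota=\arg\min_{i\le n}d(x,z_i)$, ties uniformly at random. *)

theory Defs
  imports "HOL-Probability.Probability"
begin

definition in_supp :: "'a::metric_space measure \<Rightarrow> 'a \<Rightarrow> bool" where
  "in_supp M x \<longleftrightarrow> (\<forall>e>0. emeasure M (ball x e) > 0)"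

definition f_boundary :: "'a::metric_space measure \<Rightarrow> ('a \<Rightarrow> 'b) \<Rightarrow> 'a \<Rightarrow> bool" where
  "f_boundary M f b \<longleftrightarrow> (\<forall>e>0. emeasure M (ball b e - f -` {f b}) > 0)"

definition f_connected :: "('a::metric_space \<Rightarrow> 'b) \<Rightarrow> 'a set \<Rightarrow> bool" where
  "f_connected f R \<longleftrightarrow> connected R \<and> (\<exists>y. R \<subseteq> f -` {y})"

definition f_contiguous :: "'a::metric_space measure \<Rightarrow> ('a \<Rightarrow> 'b) \<Rightarrow> 'a set \<Rightarrow> bool" where
  "f_contiguous M f R \<longleftrightarrow>
     f_connected f R \<and> R \<subseteq> {x. in_supp M x} \<and> (\<forall>b\<in>R. \<not> f_boundary M f b)"

definition f_contiguous_component :: "'a::metric_space measure \<Rightarrow> ('a \<Rightarrow> 'b) \<Rightarrow> 'a set \<Rightarrow> bool" where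
  "f_contiguous_component M f R \<longleftrightarrow>
     f_contiguous M f R \<and> (\<forall>R'. f_contiguous M f R' \<and> R \<subseteq> R' \<longrightarrow> R' = R)"

definition modefreq :: "('a \<Rightarrow> 'b) \<Rightarrow> 'a set \<Rightarrow> nat" where
  "modefreq f A = (if A = {} then 0 else Max ((\<lambda>y. card (A \<inter> f -` {y})) ` f ` A))"

definition knn_family :: "nat \<Rightarrow> 'a::metric_space set \<Rightarrow> 'a \<Rightarrow> 'a set set" where
  "knn_family K S x = {V. V \<subseteq> S \<and> card V = min K (card S) \<and>
      (\<forall>v\<in>V. \<forall>s\<in>S - V. \<not> dist s x < dist v x)}"

definition knn :: "('a::metric_space \<Rightarrow> 'b) \<Rightarrow> nat \<Rightarrow> 'a set \<Rightarrow> 'a \<Rightarrow> 'a set" where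
  "knn f K S x = (if x \<in> S then {} else arg_min (modefreq f) (\<lambda>V. V \<in> knn_family K S x))"

definition Phi :: "('a::metric_space \<Rightarrow> 'b) \<Rightarrow> nat \<Rightarrow> 'a \<Rightarrow> 'a set \<Rightarrow> nat" where
  "Phi f K x S = card (knn f K S x) - modefreq f (knn f K S x)"

text \<open>Uniform choice of an element of a finite nonempty index set using u uniform on [0,1].\<close>
definition pick :: "real \<Rightarrow> nat set \<Rightarrow> nat" where
  "pick u I = sorted_list_of_set I ! min (nat \<lfloor>u * real (card I)\<rfloor>) (card I - 1)"

text \<open>Randomness of step n: candidate stream c (only c 0, ..., c (kappa n - 1) are used),
  a uniform tie-breaker u for the selection, and a uniform tie-breaker w for the prediction.\<close>
type_synonym 'a step = "(nat \<Rightarrow> 'a) \<times> real \<times> real"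

definition select :: "('a::metric_space \<Rightarrow> 'b) \<Rightarrow> nat \<Rightarrow> (nat \<Rightarrow> nat) \<Rightarrow> nat \<Rightarrow> 'a set \<Rightarrow> 'a step \<Rightarrow> 'a" where
  "select f K \<kappa> n S s =
     (let c = fst s; u = fst (snd s);
          m = Max ((\<lambda>i. Phi f K (c i) S) ` {..<\<kappa> n});
          I = {i. i < \<kappa> n \<and> Phi f K (c i) S = m}
      in c (pick u I))"

text \<open>pts n \<omega> = [z_1, ..., z_n].\<close>
primrec pts :: "('a::metric_space \<Rightarrow> 'b) \<Rightarrow> nat \<Rightarrow> (nat \<Rightarrow> nat) \<Rightarrow> nat \<Rightarrow> (nat \<Rightarrow> 'a step) \<Rightarrow> 'a list" where
  "pts f K \<kappa> 0 \<omega> = []"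
| "pts f K \<kappa> (Suc n) \<omega> = pts f K \<kappa> n \<omega> @ [select f K \<kappa> (Suc n) (set (pts f K \<kappa> n \<omega>)) (\<omega> (Suc n))]"

definition zeta :: "('a::metric_space \<Rightarrow> 'b) \<Rightarrow> nat \<Rightarrow> (nat \<Rightarrow> nat) \<Rightarrow> nat \<Rightarrow> 'a \<Rightarrow> (nat \<Rightarrow> 'a step) \<Rightarrow> 'b" where
  "zeta f K \<kappa> n x \<omega> =
     (let ps = pts f K \<kappa> n \<omega>;
          dm = Min ((\<lambda>i. dist x (ps ! i)) ` {..<n});
          I = {i. i < n \<and> dist x (ps ! i) = dm}
      in f (ps ! pick (snd (snd (\<omega> n))) I))"

definition step_measure :: "'a measure \<Rightarrow> 'a step measure" where
  "step_measure M = PiM UNIV (\<lambda>_::nat. M) \<Otimes>\<^sub>M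
     (uniform_measure lborel {0..1::real} \<Otimes>\<^sub>M uniform_measure lborel {0..1::real})"

definition process_space :: "'a measure \<Rightarrow> (nat \<Rightarrow> 'a step) measure" where
  "process_space M = PiM UNIV (\<lambda>_::nat. step_measure M)"

end

theory Submission
  imports Defs
begin

text \<open>As \<open>x\<close> lies in an \<open>f\<close>-contiguous set, it is in the support of
  \<open>\<mu>\<close> and not an \<open>f\<close>-boundary point, so some ball \<open>B\<close> around \<open>x\<close> has measure \<open>\<rho> > 0\<close> and,
  up to a null set, contains only points labelled \<open>f x\<close>. Almost surely no candidate ever falls
  into that null set, and since \<open>\<Sum> \<rho>\<^bsup>\<kappa>(n)\<^esup> = \<infinity>\<close>, almost surely at some step \<open>n\<^sub>0\<close> all candidates
  fall into \<open>B\<close>: the probability of failing during the first \<open>N\<close> steps is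
  \<open>\<Prod>(1 - \<rho>\<^bsup>\<kappa>(n)\<^esup>) \<le> exp (- \<Sum> \<rho>\<^bsup>\<kappa>(n)\<^esup>) \<rightarrow> 0\<close>. From then on \<open>z\<^sub>n\<^sub>0 \<in> B\<close>, so the nearest
  neighbour of \<open>x\<close> among the sampled points is a drawn point of \<open>B\<close>, labelled \<open>f x\<close>.\<close>

lemma pick_in:
  assumes "finite I" "I \<noteq> {}"
  shows "pick u I \<in> I"
proof -
  have "0 < card I"
    using assms by (simp add: card_gt_0_iff)
  then have "min (nat \<lfloor>u * real (card I)\<rfloor>) (card I - 1) < length (sorted_list_of_set I)"
    by simp
  then show ?thesis
    unfolding pick_def using assms by (metis nth_mem set_sorted_list_of_set)
qed

lemma select_in_candidates:
  assumes "\<kappa> n \<ge> 1"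
  shows "select f K \<kappa> n S s \<in> fst s ` {..<\<kappa> n}"
proof -
  define m where "m = Max ((\<lambda>i. Phi f K (fst s i) S) ` {..<\<kappa> n})"
  define I where "I = {i. i < \<kappa> n \<and> Phi f K (fst s i) S = m}"
  have "m \<in> (\<lambda>i. Phi f K (fst s i) S) ` {..<\<kappa> n}"
    unfolding m_def using assms by (intro Max_in) (auto simp: lessThan_empty_iff)
  then have "I \<noteq> {}" unfolding I_def by auto
  then have "pick (fst (snd s)) I \<in> I"
    by (intro pick_in) (auto simp: I_def)
  moreover have "select f K \<kappa> n S s = fst s (pick (fst (snd s)) I)"
    unfolding select_def m_def I_def Let_def by simp
  ultimately show ?thesis unfolding I_def by auto
qed

lemma length_pts [simp]: "length (pts f K \<kappa> n \<omega>) = n"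
  by (induction n) auto

lemma nth_pts:
  "j < n \<Longrightarrow> pts f K \<kappa> n \<omega> ! j = select f K \<kappa> (Suc j) (set (pts f K \<kappa> j \<omega>)) (\<omega> (Suc j))"
  by (induction n) (auto simp: nth_append less_Suc_eq)

lemma nth_pts_in_candidates:
  assumes "\<forall>n\<ge>1. \<kappa> n \<ge> 1" "j < n"
  shows "pts f K \<kappa> n \<omega> ! j \<in> fst (\<omega> (Suc j)) ` {..<\<kappa> (Suc j)}"
  using assms by (simp add: nth_pts select_in_candidates)

lemma zeta_nearest:
  assumes "n \<ge> 1"
  obtains j where "j < n" "zeta f K \<kappa> n x \<omega> = f (pts f K \<kappa> n \<omega> ! j)"
    "\<And>k. k < n \<Longrightarrow> dist x (pts f K \<kappa> n \<omega> ! j) \<le> dist x (pts f K \<kappa> n \<omega> ! k)"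
proof -
  define ps where "ps = pts f K \<kappa> n \<omega>"
  define dm where "dm = Min ((\<lambda>i. dist x (ps ! i)) ` {..<n})"
  define I where "I = {i. i < n \<and> dist x (ps ! i) = dm}"
  have "dm \<in> (\<lambda>i. dist x (ps ! i)) ` {..<n}"
    unfolding dm_def using assms by (intro Min_in) (auto simp: lessThan_empty_iff)
  then have "I \<noteq> {}" unfolding I_def by auto
  then have j: "pick (snd (snd (\<omega> n))) I \<in> I"
    by (intro pick_in) (auto simp: I_def)
  have "zeta f K \<kappa> n x \<omega> = f (ps ! pick (snd (snd (\<omega> n))) I)"
    unfolding zeta_def ps_def dm_def I_def Let_def by simp
  moreover have "dist x (ps ! pick (snd (snd (\<omega> n))) I) \<le> dist x (ps ! k)" if "k < n" for k
    using j that unfolding I_def dm_def by auto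
  ultimately show ?thesis
    using that j unfolding I_def ps_def by blast
qed

text \<open>The point selected at step \<open>n0\<close> lies in the ball, so every later nearest neighbour of \<open>x\<close>
  does as well, and it is a drawn candidate.\<close>
lemma zeta_eventually_eq:
  assumes \<kappa>: "\<forall>n\<ge>1. \<kappa> n \<ge> 1"
    and label: "\<And>m i. fst (\<omega> m) i \<in> ball x e \<Longrightarrow> f (fst (\<omega> m) i) = y"
    and hit: "n0 \<ge> 1" "\<And>i. i < \<kappa> n0 \<Longrightarrow> fst (\<omega> n0) i \<in> ball x e"
  shows "eventually (\<lambda>n. zeta f K \<kappa> n x \<omega> = y) sequentially"
  unfolding eventually_sequentially
proof (intro exI allI impI)
  fix n assume "n0 \<le> n"
  then have "n \<ge> 1" using hit(1) by simp
  then obtain j where j: "j < n" "zeta f K \<kappa> n x \<omega> = f (pts f K \<kappa> n \<omega> ! j)"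
    and nearest: "\<And>k. k < n \<Longrightarrow> dist x (pts f K \<kappa> n \<omega> ! j) \<le> dist x (pts f K \<kappa> n \<omega> ! k)"
    by (rule zeta_nearest[where f = f and K = K and \<kappa> = \<kappa> and x = x and \<omega> = \<omega>]) blast
  have "n0 - 1 < n" "Suc (n0 - 1) = n0"
    using hit(1) \<open>n0 \<le> n\<close> by auto
  then have "pts f K \<kappa> n \<omega> ! (n0 - 1) \<in> ball x e"
    using nth_pts_in_candidates[OF \<kappa>, of "n0 - 1" n f K \<omega>] hit(2) by auto
  then have "pts f K \<kappa> n \<omega> ! j \<in> ball x e"
    using nearest[OF \<open>n0 - 1 < n\<close>] by simp
  moreover obtain i where "pts f K \<kappa> n \<omega> ! j = fst (\<omega> (Suc j)) i"
    using nth_pts_in_candidates[OF \<kappa> j(1)] by blast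
  ultimately show "zeta f K \<kappa> n x \<omega> = y"
    using j(2) label by simp
qed

lemma prod_one_minus_LIMSEQ_zero:
  fixes a :: "nat \<Rightarrow> real"
  assumes nonneg: "\<And>n. 0 \<le> a n" and le1: "\<And>n. a n \<le> 1" and div: "\<not> summable a"
  shows "(\<lambda>N. \<Prod>n<N. 1 - a n) \<longlonglongrightarrow> 0"
proof -
  have "filterlim (\<lambda>N. \<Sum>n<N. a n) at_top sequentially"
    unfolding filterlim_at_top eventually_sequentially
  proof
    fix Z :: real
    have "\<not> (\<forall>N. (\<Sum>n<N. a n) \<le> Z)"
      using div summableI_nonneg_bounded[of a Z] nonneg by blast
    then obtain N where N: "Z \<le> (\<Sum>n<N. a n)"
      by (auto simp: not_le intro: less_imp_le)
    show "\<exists>N. \<forall>m\<ge>N. Z \<le> (\<Sum>n<m. a n)"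
    proof (intro exI allI impI)
      fix m assume "N \<le> m"
      then have "(\<Sum>n<N. a n) \<le> (\<Sum>n<m. a n)"
        using nonneg by (intro sum_mono2) auto
      with N show "Z \<le> (\<Sum>n<m. a n)" by linarith
    qed
  qed
  then have exp_lim: "(\<lambda>N. exp (- (\<Sum>n<N. a n))) \<longlonglongrightarrow> 0"
    by (intro filterlim_compose[OF exp_at_bot] filterlim_compose[OF filterlim_uminus_at_bot_at_top])
  have "(\<Prod>n<N. 1 - a n) \<le> exp (- (\<Sum>n<N. a n))" for N
  proof -
    have "1 - a n \<le> exp (- a n)" for n
      using exp_ge_add_one_self[of "- a n"] by simp
    then have "(\<Prod>n<N. 1 - a n) \<le> (\<Prod>n<N. exp (- a n))"
      using le1 by (intro prod_mono) auto
    also have "\<dots> = exp (- (\<Sum>n<N. a n))"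
      by (simp add: exp_sum sum_negf[symmetric])
    finally show ?thesis .
  qed
  moreover have "0 \<le> (\<Prod>n<N. 1 - a n)" for N
    using le1 by (simp add: prod_nonneg)
  ultimately show ?thesis
    by (intro tendsto_sandwich[OF _ _ tendsto_const exp_lim]) auto
qed

lemma PiM_cylinder:
  fixes N :: "'a measure" and I :: "'i set"
  assumes N: "prob_space N" and J: "finite J" "J \<subseteq> I" and A: "\<And>i. i \<in> J \<Longrightarrow> A i \<in> sets N"
  shows sets_PiM_cylinder: "{\<omega> \<in> space (PiM I (\<lambda>_. N)). \<forall>i\<in>J. \<omega> i \<in> A i} \<in> sets (PiM I (\<lambda>_. N))"
    and emeasure_PiM_cylinder:
      "emeasure (PiM I (\<lambda>_. N)) {\<omega> \<in> space (PiM I (\<lambda>_. N)). \<forall>i\<in>J. \<omega> i \<in> A i} = (\<Prod>i\<in>J. emeasure N (A i))"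
proof -
  have cyl: "{\<omega> \<in> space (PiM I (\<lambda>_. N)). \<forall>i\<in>J. \<omega> i \<in> A i} = prod_emb I (\<lambda>_. N) J (PiE J A)"
    using J(2) by (auto simp: prod_emb_iff space_PiM PiE_iff restrict_PiE_iff)
  show "{\<omega> \<in> space (PiM I (\<lambda>_. N)). \<forall>i\<in>J. \<omega> i \<in> A i} \<in> sets (PiM I (\<lambda>_. N))"
    unfolding cyl using J A by (intro sets_PiM_I) auto
  show "emeasure (PiM I (\<lambda>_. N)) {\<omega> \<in> space (PiM I (\<lambda>_. N)). \<forall>i\<in>J. \<omega> i \<in> A i} = (\<Prod>i\<in>J. emeasure N (A i))"
    unfolding cyl using N J A by (intro emeasure_PiM_emb) auto
qed

lemma AE_PiM_all_notin_null:
  assumes N: "prob_space N" and A: "A \<in> null_sets N"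
  shows "AE \<omega> in PiM (UNIV :: 'i::countable set) (\<lambda>_. N). \<forall>i. \<omega> i \<notin> A"
  unfolding AE_all_countable
proof
  fix i :: 'i
  show "AE \<omega> in PiM UNIV (\<lambda>_. N). \<omega> i \<notin> A"
  proof (rule AE_I')
    let ?E = "{\<omega> \<in> space (PiM UNIV (\<lambda>_. N)). \<forall>j\<in>{i}. \<omega> j \<in> A}"
    have A_sets: "A \<in> sets N" using A by blast
    show "?E \<in> null_sets (PiM UNIV (\<lambda>_. N))"
    proof (rule null_setsI)
      show "emeasure (PiM UNIV (\<lambda>_. N)) ?E = 0"
        using emeasure_PiM_cylinder[OF N, of "{i}" UNIV "\<lambda>_. A"] A_sets A by auto
      show "?E \<in> sets (PiM UNIV (\<lambda>_. N))"
        using sets_PiM_cylinder[OF N, of "{i}" UNIV "\<lambda>_. A"] A_sets by auto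
    qed
  qed auto
qed

lemma AE_PiM_exists_mem:
  assumes N: "prob_space N" and G: "\<And>n. G n \<in> sets N" and div: "\<not> summable (\<lambda>n. measure N (G n))"
  shows "AE \<omega> in PiM UNIV (\<lambda>_. N). \<exists>n. \<omega> n \<in> G n"
proof -
  interpret N: prob_space N by (rule N)
  interpret P: prob_space "PiM UNIV (\<lambda>_::nat. N)" by (intro prob_space_PiM N)
  define C where "C m = {\<omega> \<in> space (PiM UNIV (\<lambda>_. N)). \<forall>n\<in>{..<m}. \<omega> n \<in> space N - G n}" for m
  have C_sets: "C m \<in> sets (PiM UNIV (\<lambda>_. N))" for m
    unfolding C_def using G by (intro sets_PiM_cylinder N) auto
  have C_measure: "measure (PiM UNIV (\<lambda>_. N)) (C m) = (\<Prod>n<m. 1 - measure N (G n))" for m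
  proof -
    have "emeasure (PiM UNIV (\<lambda>_. N)) (C m) = (\<Prod>n<m. ennreal (1 - measure N (G n)))"
      unfolding C_def using G
      by (subst emeasure_PiM_cylinder[OF N]) (auto simp: N.emeasure_eq_measure N.prob_compl)
    also have "\<dots> = ennreal (\<Prod>n<m. 1 - measure N (G n))"
      by (intro prod_ennreal) auto
    finally show ?thesis
      by (simp add: P.emeasure_eq_measure prod_nonneg)
  qed
  have "(\<lambda>m. \<Prod>n<m. 1 - measure N (G n)) \<longlonglongrightarrow> 0"
    using div by (intro prod_one_minus_LIMSEQ_zero) auto
  moreover have "measure (PiM UNIV (\<lambda>_. N)) (\<Inter>m. C m) \<le> (\<Prod>n<m. 1 - measure N (G n))" for m
    unfolding C_measure[symmetric] using C_sets by (intro P.finite_measure_mono) auto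
  ultimately have "measure (PiM UNIV (\<lambda>_. N)) (\<Inter>m. C m) \<le> 0"
    by (intro LIMSEQ_le_const[of "\<lambda>m. \<Prod>n<m. 1 - measure N (G n)"]) auto
  then have "measure (PiM UNIV (\<lambda>_. N)) (\<Inter>m. C m) = 0"
    by (intro antisym measure_nonneg)
  then have "(\<Inter>m. C m) \<in> null_sets (PiM UNIV (\<lambda>_. N))"
    using C_sets by (intro null_setsI) (auto simp: P.emeasure_eq_measure)
  moreover have "{\<omega> \<in> space (PiM UNIV (\<lambda>_. N)). \<not> (\<exists>n. \<omega> n \<in> G n)} \<subseteq> (\<Inter>m. C m)"
  proof
    fix \<omega> assume "\<omega> \<in> {\<omega> \<in> space (PiM UNIV (\<lambda>_. N)). \<not> (\<exists>n. \<omega> n \<in> G n)}"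
    then have \<omega>: "\<omega> \<in> space (PiM UNIV (\<lambda>_. N))" and miss: "\<And>n. \<omega> n \<notin> G n"
      by simp_all
    have "\<And>n. \<omega> n \<in> space N"
      using measurable_space[OF measurable_component_singleton \<omega>] by simp
    with \<omega> miss show "\<omega> \<in> (\<Inter>m. C m)"
      unfolding C_def by simp
  qed
  ultimately show ?thesis
    by (rule AE_I')
qed

lemma prob_space_step_measure: "prob_space M \<Longrightarrow> prob_space (step_measure M)"
  unfolding step_measure_def
  by (intro prob_space_pair prob_space_PiM prob_space_uniform_measure) auto

lemma step_measure_candidates:
  assumes M: "prob_space M" and A: "A \<in> sets M" and J: "finite J"
  shows sets_step_measure_candidates:
      "{s \<in> space (step_measure M). \<forall>i\<in>J. fst s i \<in> A} \<in> sets (step_measure M)"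
    and emeasure_step_measure_candidates:
      "emeasure (step_measure M) {s \<in> space (step_measure M). \<forall>i\<in>J. fst s i \<in> A} = emeasure M A ^ card J"
proof -
  let ?C = "PiM UNIV (\<lambda>_::nat. M)"
  let ?U = "uniform_measure lborel {0..1::real}"
  interpret U: prob_space "?U \<Otimes>\<^sub>M ?U"
    by (intro prob_space_pair prob_space_uniform_measure) auto
  let ?cyl = "{c \<in> space ?C. \<forall>i\<in>J. c i \<in> A}"
  have split: "{s \<in> space (step_measure M). \<forall>i\<in>J. fst s i \<in> A} = ?cyl \<times> space (?U \<Otimes>\<^sub>M ?U)"
    unfolding step_measure_def by (auto simp: space_pair_measure)
  have cyl: "?cyl \<in> sets ?C"
    using M A J by (intro sets_PiM_cylinder) auto
  then show "{s \<in> space (step_measure M). \<forall>i\<in>J. fst s i \<in> A} \<in> sets (step_measure M)"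
    unfolding split by (simp add: step_measure_def pair_measureI)
  have "emeasure (step_measure M) (?cyl \<times> space (?U \<Otimes>\<^sub>M ?U)) = emeasure ?C ?cyl"
    unfolding step_measure_def
    by (simp add: U.emeasure_pair_measure_Times[OF cyl sets.top] U.emeasure_space_1)
  also have "\<dots> = emeasure M A ^ card J"
    using M A J by (simp add: emeasure_PiM_cylinder)
  finally show "emeasure (step_measure M) {s \<in> space (step_measure M). \<forall>i\<in>J. fst s i \<in> A} = emeasure M A ^ card J"
    unfolding split .
qed

lemma AE_process_candidates_notin:
  assumes M: "prob_space M" and A: "A \<in> null_sets M"
  shows "AE \<omega> in process_space M. \<forall>n i. fst (\<omega> n) i \<notin> A"
proof -
  have "AE \<omega> in process_space M. \<forall>n. fst (\<omega> n) i \<notin> A" for i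
  proof -
    let ?E = "{s \<in> space (step_measure M). \<forall>j\<in>{i}. fst s j \<in> A}"
    have A_sets: "A \<in> sets M"
      using A by blast
    have "?E \<in> null_sets (step_measure M)"
    proof (rule null_setsI)
      show "emeasure (step_measure M) ?E = 0"
        using emeasure_step_measure_candidates[OF M A_sets, of "{i}"] null_setsD1[OF A] by simp
      show "?E \<in> sets (step_measure M)"
        using sets_step_measure_candidates[OF M A_sets, of "{i}"] by simp
    qed
    then have "AE \<omega> in process_space M. \<forall>n. \<omega> n \<notin> ?E"
      unfolding process_space_def by (intro AE_PiM_all_notin_null prob_space_step_measure M)
    moreover have "\<omega> n \<in> space (step_measure M)" if "\<omega> \<in> space (process_space M)" for \<omega> n
      using measurable_space[OF measurable_component_singleton that[unfolded process_space_def]] by simp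
    ultimately show ?thesis
      by (auto elim!: AE_E intro!: AE_I')
  qed
  then show ?thesis
    by (simp add: AE_all_countable)
qed

lemma AE_process_step_all_candidates_in:
  assumes M: "prob_space M" and B: "B \<in> sets M"
    and div: "\<not> summable (\<lambda>n. measure M B ^ \<kappa> (Suc n))"
  shows "AE \<omega> in process_space M. \<exists>n\<ge>1. \<forall>i<\<kappa> n. fst (\<omega> n) i \<in> B"
proof -
  interpret M: prob_space M by (rule M)
  interpret S: prob_space "step_measure M" by (intro prob_space_step_measure M)
  \<comment> \<open>the process starts at step 1, and \<open>\<kappa> 0\<close> may be \<open>0\<close>\<close>
  define G where
    "G n = (if n = 0 then {} else {s \<in> space (step_measure M). \<forall>i\<in>{..<\<kappa> n}. fst s i \<in> B})" for n
  have G_sets: "G n \<in> sets (step_measure M)" for n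
    unfolding G_def using M B by (auto intro: sets_step_measure_candidates)
  have "measure (step_measure M) (G (Suc n)) = measure M B ^ \<kappa> (Suc n)" for n
  proof -
    have "emeasure (step_measure M) (G (Suc n)) = ennreal (measure M B ^ \<kappa> (Suc n))"
      unfolding G_def using M B
      by (simp add: emeasure_step_measure_candidates M.emeasure_eq_measure ennreal_power)
    then show ?thesis
      by (simp add: S.emeasure_eq_measure)
  qed
  then have "\<not> summable (\<lambda>n. measure (step_measure M) (G n))"
    using div by (subst summable_Suc_iff[symmetric]) simp
  then have "AE \<omega> in process_space M. \<exists>n. \<omega> n \<in> G n"
    unfolding process_space_def
    by (intro AE_PiM_exists_mem prob_space_step_measure M G_sets)
  then show ?thesis
  proof (rule eventually_mono)
    fix \<omega> assume "\<exists>n. \<omega> n \<in> G n"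
    then obtain n where "\<omega> n \<in> G n" ..
    then show "\<exists>n\<ge>1. \<forall>i<\<kappa> n. fst (\<omega> n) i \<in> B"
      by (intro exI[of _ n]) (auto simp: G_def split: if_splits)
  qed
qed

theorem theorem6:
  fixes M :: "'a::metric_space measure" and f :: "'a \<Rightarrow> 'b::countable"
    and K :: nat and \<kappa> :: "nat \<Rightarrow> nat" and x :: 'a and R :: "'a set"
  assumes "prob_space M"
    and "sets M = sets borel"
    and "\<forall>y. f -` {y} \<in> sets M"
    and "K \<ge> 2"
    and "\<forall>n\<ge>1. \<kappa> n \<ge> 1"
    and "\<forall>\<rho>::real. 0 < \<rho> \<and> \<rho> \<le> 1 \<longrightarrow> \<not> summable (\<lambda>n. \<rho> ^ \<kappa> (Suc n))"
    and "f_contiguous_component M f R"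
    and "x \<in> R"
    and "R \<in> sets M"
    and "emeasure M R > 0"
  shows "AE \<omega> in process_space M. eventually (\<lambda>n. zeta f K \<kappa> n x \<omega> = f x) sequentially"
proof -
  interpret M: prob_space M by (rule assms(1))
  have "in_supp M x" and "\<not> f_boundary M f x"
    using assms(7,8) unfolding f_contiguous_component_def f_contiguous_def by auto
  then obtain e where e: "e > 0" "emeasure M (ball x e - f -` {f x}) = 0"
    and ball_pos: "0 < measure M (ball x e)"
    unfolding f_boundary_def in_supp_def by (auto simp: not_gr_zero M.emeasure_eq_measure[of "ball x _"])
  have ball_sets: "ball x e \<in> sets M"
    using assms(2) by simp
  have mislabelled: "ball x e - f -` {f x} \<in> null_sets M"
    using ball_sets assms(3) e(2) by auto
  have "\<not> summable (\<lambda>n. measure M (ball x e) ^ \<kappa> (Suc n))"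
    using assms(6) ball_pos M.prob_le_1 by blast
  from AE_process_candidates_notin[OF assms(1) mislabelled]
    AE_process_step_all_candidates_in[OF assms(1) ball_sets this]
  have "AE \<omega> in process_space M. (\<forall>n i. fst (\<omega> n) i \<notin> ball x e - f -` {f x})
      \<and> (\<exists>n\<ge>1. \<forall>i<\<kappa> n. fst (\<omega> n) i \<in> ball x e)"
    by eventually_elim auto
  then show ?thesis
  proof eventually_elim
    case (elim \<omega>)
    then obtain n0 where "n0 \<ge> 1" "\<forall>i<\<kappa> n0. fst (\<omega> n0) i \<in> ball x e"
      by blast
    with elim show ?case
      by (intro zeta_eventually_eq[OF assms(5), of \<omega> x e f]) auto
  qed
qed

end
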